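(* Let $\gamma\in\{0\}\cup(0,\infty)\cup\{\infty\}$. The minimum of the convex relaxed problem $\min_{u\in\mathcal{B}'}\ \sum_{i=1}^n\sum_{x\in V}C_i(x)u_i(x)+\sum_{i=1}^n TV_w(u_i)$ — with no size information if $\gamma=0$, with the penalty term $\sum_{i=1}^nP_\gamma(\|u_i\|)$ added to the energy if $0<\gamma<\infty$, and subject to the size constraints $S_i^\ell\le\|u_i\|\le S_i^u$ for all $i$ if $\gamma=\infty$ — equals the value of the dual problem $$\sup_{q,\rho^1,\rho^2}\ \sum_{x\in V}\min_{i\in I}\Big(C_i(x)+(\mathrm{div}_w q_i)(x)+\rho_i^2-\rho_i^1\Big)+\sum_{i=1}^n\big(\rho_i^1S_i^\ell-\rho_i^2S_i^u\big),$$ subject to $(q_1,\dots,q_n)\in S^n_\infty$ and $\rho_i^1,\rho_i^2\in[0,\gamma]$ for $i=1,\dots,n$ (where $[0,\infty]$ means $[0,\infty)$); i.e. the relaxed problem can equivalently be formulated as this dual problem.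
   Context: Let $G=(V,E)$ be a finite undirected graph with symmetric weights $w(x,y)=w(y,x)>0$ for $\{x,y\}\in E$ and $w(x,y)=0$ otherwise. For $v:V\to\mathbb{R}$, $TV_w(v)=\frac12\sum_{x,y\in V}w(x,y)|v(y)-v(x)|$. For $\phi:V\times V\to\mathbb{R}$, the divergence is $(\mathrm{div}_w\phi)(x)=\frac12\sum_{y\in V}w(x,y)(\phi(x,y)-\phi(y,x))$ and $\|\phi\|_{\infty}=\max_{x,y\in V}|\phi(x,y)|$. $S^n_\infty=\{(q_1,\dots,q_n):\ q_i:V\times V\to\mathbb{R},\ \|q_i\|_\infty\le1\ \forall i\}$. Let $n\ge2$, $I=\{1,\dots,n\}$, $C_i:V\to\mathbb{R}$ given. For $u=(u_1,\dots,u_n):V\to\mathbb{R}^n$, $\|u_i\|=\sum_{x\in V}u_i(x)$. $\mathcal{B}'=\{u:V\to[0,1]^n:\sum_iu_i(x)=1\ \forall x\}$. Size bounds are integers $0\le S_i^\ell\le S_i^u$ with $\sum_iS_i^\ell\le|V|\le\sum_iS_i^u$. For $0<\gamma<\infty$, $P_\gamma(t)=0$ if $S_i^\ell\le t\le S_i^u$, $\gamma(t-S_i^u)$ if $t>S_i^u$, $\gamma(S_i^\ell-t)$ if $t<S_i^\ell$. *)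

theory Defs
  imports "HOL-Analysis.Analysis"
begin

text \<open>Vertex set V is the (finite) universe of type 'v. Weights w :: 'v => 'v => real.\<close>

definition TVw :: "('v::finite \<Rightarrow> 'v \<Rightarrow> real) \<Rightarrow> ('v \<Rightarrow> real) \<Rightarrow> real" where
  "TVw w v = (1/2) * (\<Sum>x\<in>UNIV. \<Sum>y\<in>UNIV. w x y * \<bar>v y - v x\<bar>)"

definition divw :: "('v::finite \<Rightarrow> 'v \<Rightarrow> real) \<Rightarrow> ('v \<Rightarrow> 'v \<Rightarrow> real) \<Rightarrow> 'v \<Rightarrow> real" where
  "divw w \<phi> x = (1/2) * (\<Sum>y\<in>UNIV. w x y * (\<phi> x y - \<phi> y x))"

definition sup_norm :: "('v::finite \<Rightarrow> 'v \<Rightarrow> real) \<Rightarrow> real" where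
  "sup_norm \<phi> = Max {\<bar>\<phi> x y\<bar> | x y. True}"

definition Sinf :: "nat \<Rightarrow> (nat \<Rightarrow> 'v::finite \<Rightarrow> 'v \<Rightarrow> real) set" where
  "Sinf n = {q. \<forall>i\<in>{1..n}. sup_norm (q i) \<le> 1}"

definition mass :: "('v::finite \<Rightarrow> real) \<Rightarrow> real" where
  "mass v = (\<Sum>x\<in>UNIV. v x)"

definition Bprime :: "nat \<Rightarrow> (nat \<Rightarrow> 'v::finite \<Rightarrow> real) set" where
  "Bprime n = {u. \<forall>x. (\<forall>i\<in>{1..n}. 0 \<le> u i x \<and> u i x \<le> 1) \<and> (\<Sum>i=1..n. u i x) = 1}"

definition Pgam :: "real \<Rightarrow> nat \<Rightarrow> nat \<Rightarrow> real \<Rightarrow> real" where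
  "Pgam g Sl Su t = (if real Sl \<le> t \<and> t \<le> real Su then 0
                     else if t > real Su then g * (t - real Su) else g * (real Sl - t))"

definition primal_feasible :: "nat \<Rightarrow> ereal \<Rightarrow> (nat \<Rightarrow> nat) \<Rightarrow> (nat \<Rightarrow> nat)
    \<Rightarrow> (nat \<Rightarrow> 'v::finite \<Rightarrow> real) set" where
  "primal_feasible n \<gamma> Sl Su = {u \<in> Bprime n.
      \<gamma> = \<infinity> \<longrightarrow> (\<forall>i\<in>{1..n}. real (Sl i) \<le> mass (u i) \<and> mass (u i) \<le> real (Su i))}"

definition primal_energy :: "('v::finite \<Rightarrow> 'v \<Rightarrow> real) \<Rightarrow> nat \<Rightarrow> ereal \<Rightarrow> (nat \<Rightarrow> 'v \<Rightarrow> real)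
    \<Rightarrow> (nat \<Rightarrow> nat) \<Rightarrow> (nat \<Rightarrow> nat) \<Rightarrow> (nat \<Rightarrow> 'v \<Rightarrow> real) \<Rightarrow> real" where
  "primal_energy w n \<gamma> C Sl Su u =
     (\<Sum>i=1..n. \<Sum>x\<in>UNIV. C i x * u i x) + (\<Sum>i=1..n. TVw w (u i))
     + (if 0 < \<gamma> \<and> \<gamma> < \<infinity>
        then (\<Sum>i=1..n. Pgam (real_of_ereal \<gamma>) (Sl i) (Su i) (mass (u i))) else 0)"

definition dual_feasible :: "nat \<Rightarrow> ereal
    \<Rightarrow> ((nat \<Rightarrow> 'v::finite \<Rightarrow> 'v \<Rightarrow> real) \<times> (nat \<Rightarrow> real) \<times> (nat \<Rightarrow> real)) set" where
  "dual_feasible n \<gamma> = {(q, r1, r2). q \<in> Sinf n \<and>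
      (\<forall>i\<in>{1..n}. 0 \<le> r1 i \<and> ereal (r1 i) \<le> \<gamma> \<and> 0 \<le> r2 i \<and> ereal (r2 i) \<le> \<gamma>)}"

definition dual_objective :: "('v::finite \<Rightarrow> 'v \<Rightarrow> real) \<Rightarrow> nat \<Rightarrow> (nat \<Rightarrow> 'v \<Rightarrow> real)
    \<Rightarrow> (nat \<Rightarrow> nat) \<Rightarrow> (nat \<Rightarrow> nat)
    \<Rightarrow> (nat \<Rightarrow> 'v \<Rightarrow> 'v \<Rightarrow> real) \<times> (nat \<Rightarrow> real) \<times> (nat \<Rightarrow> real) \<Rightarrow> real" where
  "dual_objective w n C Sl Su d = (case d of (q, r1, r2) \<Rightarrow>
     (\<Sum>x\<in>UNIV. Min ((\<lambda>i. C i x + divw w (q i) x + r2 i - r1 i) ` {1..n}))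
     + (\<Sum>i=1..n. r1 i * real (Sl i) - r2 i * real (Su i)))"

end

theory Submission
  imports Defs
begin

(* The Lagrangian L(u; q, rho1, rho2) of the relaxed problem is affine in u and in the
   multipliers. Minimising it over u in B' puts all weight at each vertex on the cheapest label,
   which gives the dual objective. Maximising it over the multipliers gives back the primal
   energy: q = sgn (u_i y - u_i x) turns the divergence term into TV_w(u_i), multipliers in
   [0, gamma] reproduce the penalty P_gamma, and for gamma = infinity they drive L to +infinity
   off the size constraints. Strong duality is thus a minimax equality for L, which holds by a
   minimax theorem of Ky Fan type, B' being compact; the primal minimum exists by compactness. *)

lemma convex_comb_le: "x \<le> a \<Longrightarrow> y \<le> a \<Longrightarrow> t \<in> {0..1} \<Longrightarrow> t * x + (1 - t) * y \<le> (a :: real)"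
  by (intro convex_bound_le) auto

lemma abs_convex_comb_le:
  assumes "\<bar>x\<bar> \<le> a" "\<bar>y\<bar> \<le> a" "t \<in> {0..1}"
  shows "\<bar>t * x + (1 - t) * y\<bar> \<le> (a :: real)"
  using convex_comb_le[of x a y t] convex_comb_le[of "-x" a "-y" t] assms
  by (simp add: abs_le_iff)

lemma ereal_convex_comb_le:
  assumes "ereal x \<le> g" "ereal y \<le> g" "t \<in> {0..1}"
  shows "ereal (t * x + (1 - t) * y) \<le> g"
  using assms convex_comb_le[of x _ y t] by (cases g) auto

lemma sum_convex_comb: "(\<Sum>i\<in>A. t * f i + (1 - t) * g i) = t * sum f A + (1 - t) * (sum g A :: real)"
  by (simp add: sum.distrib sum_distrib_left)

lemma Min_le_convex_combination:
  fixes a p :: "'i \<Rightarrow> real"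
  assumes "finite I" "\<And>i. i \<in> I \<Longrightarrow> 0 \<le> p i" "sum p I = 1"
  shows "Min (a ` I) \<le> (\<Sum>i\<in>I. p i * a i)"
proof -
  have "Min (a ` I) = (\<Sum>i\<in>I. p i * Min (a ` I))"
    using assms(3) by (simp add: sum_distrib_right[symmetric])
  also have "\<dots> \<le> (\<Sum>i\<in>I. p i * a i)"
    using assms(1,2) by (intro sum_mono mult_left_mono) auto
  finally show ?thesis .
qed

lemma compact_PiE_UNIV:
  assumes "\<And>i. compact (S i)"
  shows "compact (Pi\<^sub>E UNIV S :: ('a \<Rightarrow> 'b::topological_space) set)"
proof -
  have "compactin (product_topology (\<lambda>_. euclidean) UNIV) (Pi\<^sub>E UNIV S :: ('a \<Rightarrow> 'b) set)"
    using assms by (auto simp: compactin_PiE compactin_euclidean_iff)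
  then show ?thesis by (simp add: euclidean_product_topology compactin_euclidean_iff)
qed

lemma continuous_on_apply2 [continuous_intros]: "continuous_on S (\<lambda>f. f i j)"
  by (rule continuous_on_product_then_coordinatewise[of _ "\<lambda>f. f i"],
      rule continuous_on_product_then_coordinatewise[OF continuous_on_id])

section \<open>A minimax theorem\<close>

(* Ky Fan's affine-like families: the minimax theorem below needs no more than this on either side. *)
definition affinelike :: "'a set \<Rightarrow> ('a \<Rightarrow> real) set \<Rightarrow> bool" where
  "affinelike X F \<longleftrightarrow>
     (\<forall>x\<in>X. \<forall>x'\<in>X. \<forall>t\<in>{0..1}. \<exists>z\<in>X. \<forall>f\<in>F. f z = t * f x + (1 - t) * f x')"

lemma affinelikeD:
  "affinelike X F \<Longrightarrow> x \<in> X \<Longrightarrow> x' \<in> X \<Longrightarrow> t \<in> {0..1} \<Longrightarrow>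
    \<exists>z\<in>X. \<forall>f\<in>F. f z = t * f x + (1 - t) * f x'"
  unfolding affinelike_def by blast

lemma affinelike_subset: "affinelike X F \<Longrightarrow> G \<subseteq> F \<Longrightarrow> affinelike X G"
  unfolding affinelike_def by blast

lemma minimax_two_functions:
  fixes f g :: "'a::topological_space \<Rightarrow> real"
  assumes X: "compact X" and f: "continuous_on X f" and g: "continuous_on X g"
    and fg: "affinelike X {f, g}" and exceeds: "\<And>x. x \<in> X \<Longrightarrow> c < f x \<or> c < g x"
  shows "\<exists>t\<in>{0..1}. \<forall>x\<in>X. c < t * f x + (1 - t) * g x"
proof (cases "X = {}")
  case False
  define G where "G = (\<lambda>x. (f x, g x)) ` X"
  define Q where "Q = {p :: real \<times> real. fst p \<le> c \<and> snd p \<le> c}"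
  have "compact G"
    unfolding G_def by (intro compact_continuous_image continuous_on_Pair f g X)
  moreover have "convex G"
    unfolding convex_alt G_def
  proof (intro ballI allI impI)
    fix p p' and t :: real
    assume "p \<in> (\<lambda>x. (f x, g x)) ` X" "p' \<in> (\<lambda>x. (f x, g x)) ` X" "0 \<le> t \<and> t \<le> 1"
    then obtain x x' where "x \<in> X" "x' \<in> X" "p = (f x, g x)" "p' = (f x', g x')" "1 - t \<in> {0..1}"
      by auto
    moreover from this obtain z where "z \<in> X" "\<forall>h\<in>{f, g}. h z = (1 - t) * h x + (1 - (1 - t)) * h x'"
      using affinelikeD[OF fg] by meson
    ultimately show "(1 - t) *\<^sub>R p + t *\<^sub>R p' \<in> (\<lambda>x. (f x, g x)) ` X"
      by (auto intro!: image_eqI[where x = z])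
  qed
  moreover have "convex Q" "closed Q"
    unfolding Q_def by (auto simp: convex_alt intro!: closed_Collect_conj closed_Collect_le
        continuous_intros convex_bound_le)
  moreover have "Q \<inter> G = {}" "G \<noteq> {}"
    using exceeds False unfolding Q_def G_def by force+
  \<comment> \<open>The quadrant \<open>Q\<close> is unbounded below, so the normal of a line separating it from \<open>G\<close>
    has nonnegative entries; normalised, it is the weight \<open>t\<close>.\<close>
  ultimately obtain a b where
    Q: "\<forall>p\<in>Q. inner a p < b" and G: "\<forall>p\<in>G. b < inner a p"
    using separating_hyperplane_closed_compact by metis
  obtain a1 a2 where a: "a = (a1, a2)" by (cases a)
  have below: "a1 * p1 + a2 * p2 < b" if "p1 \<le> c" "p2 \<le> c" for p1 p2
    using Q that unfolding a Q_def by (auto simp: inner_prod_def)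
  have above: "b < a1 * f x + a2 * g x" if "x \<in> X" for x
    using G that unfolding a G_def by (auto simp: inner_prod_def)
  have "0 \<le> a1"
  proof (rule ccontr)
    assume "\<not> 0 \<le> a1"
    with below[of "c + (b - (a1 + a2) * c) / a1" c] below[of c c] show False
      by (simp add: field_simps)
  qed
  moreover have "0 \<le> a2"
  proof (rule ccontr)
    assume "\<not> 0 \<le> a2"
    with below[of c "c + (b - (a1 + a2) * c) / a2"] below[of c c] show False
      by (simp add: field_simps)
  qed
  moreover obtain x0 where "x0 \<in> X" using False by auto
  ultimately have pos: "0 < a1 + a2"
    using below[of c c] above[of x0] by (cases "a1 = 0 \<and> a2 = 0") auto
  have "c < (a1 / (a1 + a2)) * f x + (1 - a1 / (a1 + a2)) * g x" if "x \<in> X" for x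
  proof -
    have "(a1 + a2) * c < a1 * f x + a2 * g x"
      using below[of c c] above[OF that] by (simp add: algebra_simps)
    moreover have "(a1 / (a1 + a2)) * f x + (1 - a1 / (a1 + a2)) * g x
        = (a1 * f x + a2 * g x) / (a1 + a2)"
      using pos by (simp add: diff_divide_eq_iff add_divide_distrib)
    ultimately show ?thesis
      using pos by (simp add: pos_less_divide_eq mult.commute)
  qed
  moreover have "a1 / (a1 + a2) \<in> {0..1}"
    using \<open>0 \<le> a1\<close> \<open>0 \<le> a2\<close> pos by auto
  ultimately show ?thesis by blast
qed (intro bexI[of _ 0], auto)

lemma minimax_finite_cover:
  fixes L :: "'a::topological_space \<Rightarrow> 'b \<Rightarrow> real"
  assumes "finite Y" "Y \<subseteq> D" "D \<noteq> {}" "compact X"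
    and cont: "\<And>y. y \<in> D \<Longrightarrow> continuous_on UNIV (\<lambda>x. L x y)"
    and "affinelike X ((\<lambda>y x. L x y) ` D)" "affinelike D (L ` X)"
    and "\<And>x. x \<in> X \<Longrightarrow> \<exists>y\<in>Y. c < L x y"
  shows "\<exists>z\<in>D. \<forall>x\<in>X. c < L x z"
  using assms(1,2,4,6,7,8)
proof (induction Y arbitrary: X rule: finite_induct)
  case empty
  then show ?case using \<open>D \<noteq> {}\<close> by auto
next
  case (insert y0 Y)
  then have y0: "y0 \<in> D" by simp
  \<comment> \<open>On \<open>X'\<close> the smaller cover \<open>Y\<close> suffices; the two-function case mixes its witness with \<open>y0\<close>.\<close>
  define X' where "X' = X \<inter> {x. L x y0 \<le> c}"
  have "compact X'"
    unfolding X'_def using \<open>compact X\<close> cont[OF y0]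
    by (intro compact_Int_closed closed_Collect_le continuous_intros) auto
  moreover have "affinelike X' ((\<lambda>y x. L x y) ` D)"
    unfolding affinelike_def
  proof (intro ballI)
    fix x x' and t :: real
    assume x: "x \<in> X'" "x' \<in> X'" and t: "t \<in> {0..1}"
    then obtain z where z: "z \<in> X" "\<forall>y\<in>D. L z y = t * L x y + (1 - t) * L x' y"
      using affinelikeD[OF \<open>affinelike X ((\<lambda>y x. L x y) ` D)\<close>, of x x' t]
      unfolding X'_def by auto
    have "t * L x y0 + (1 - t) * L x' y0 \<le> t * c + (1 - t) * c"
      using x t unfolding X'_def by (intro add_mono mult_left_mono) auto
    moreover have "L z y0 = t * L x y0 + (1 - t) * L x' y0"
      using z y0 by blast
    ultimately have "z \<in> X'"
      using z(1) unfolding X'_def by (simp add: algebra_simps)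
    with z show "\<exists>z\<in>X'. \<forall>f\<in>(\<lambda>y x. L x y) ` D. f z = t * f x + (1 - t) * f x'"
      by auto
  qed
  moreover have "affinelike D (L ` X')"
    using insert.prems(4) by (rule affinelike_subset) (auto simp: X'_def)
  moreover have "\<exists>y\<in>Y. c < L x y" if "x \<in> X'" for x
    using insert.prems(5) that unfolding X'_def by force
  ultimately obtain z where z: "z \<in> D" "\<forall>x\<in>X'. c < L x z"
    using insert.IH insert.prems(1) by blast
  have "\<exists>t\<in>{0..1}. \<forall>x\<in>X. c < t * L x z + (1 - t) * L x y0"
  proof (rule minimax_two_functions)
    show "continuous_on X (\<lambda>x. L x z)" "continuous_on X (\<lambda>x. L x y0)"
      using cont z(1) y0 continuous_on_subset by blast+
    show "affinelike X {\<lambda>x. L x z, \<lambda>x. L x y0}"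
      using insert.prems(3) by (rule affinelike_subset) (use z(1) y0 in auto)
    show "c < L x z \<or> c < L x y0" if "x \<in> X" for x
      using z(2) that unfolding X'_def by force
  qed fact
  then obtain t where "t \<in> {0..1}" "\<forall>x\<in>X. c < t * L x z + (1 - t) * L x y0"
    by blast
  moreover obtain z' where "z' \<in> D" "\<forall>x\<in>X. L x z' = t * L x z + (1 - t) * L x y0"
    using affinelikeD[OF insert.prems(4) z(1) y0 \<open>t \<in> {0..1}\<close>] by auto
  ultimately show ?case by metis
qed

theorem minimax_compact:
  fixes L :: "'a::topological_space \<Rightarrow> 'b \<Rightarrow> real"
  assumes "D \<noteq> {}" "compact X"
    and cont: "\<And>y. y \<in> D \<Longrightarrow> continuous_on UNIV (\<lambda>x. L x y)"
    and "affinelike X ((\<lambda>y x. L x y) ` D)" "affinelike D (L ` X)"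
    and exceeds: "\<And>x. x \<in> X \<Longrightarrow> \<exists>y\<in>D. c < L x y"
  shows "\<exists>z\<in>D. \<forall>x\<in>X. c < L x z"
proof -
  have "open {x. c < L x y}" if "y \<in> D" for y
    using cont[OF that] by (auto intro!: open_Collect_less continuous_intros)
  moreover have "X \<subseteq> (\<Union>y\<in>D. {x. c < L x y})"
    using exceeds by auto
  ultimately obtain Y where "Y \<subseteq> D" "finite Y" "X \<subseteq> (\<Union>y\<in>Y. {x. c < L x y})"
    using compactE_image[OF \<open>compact X\<close>] by metis
  then show ?thesis
    using minimax_finite_cover[of Y D X L] assms by blast
qed

section \<open>Divergence and total variation\<close>

lemma sup_norm_le_1_iff: "sup_norm (q :: 'v::finite \<Rightarrow> 'v \<Rightarrow> real) \<le> 1 \<longleftrightarrow> (\<forall>x y. \<bar>q x y\<bar> \<le> 1)"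
proof -
  have eq: "{\<bar>q x y\<bar> | x y. True} = (\<lambda>(x, y). \<bar>q x y\<bar>) ` UNIV"
    by auto
  show ?thesis
    unfolding sup_norm_def eq by (subst Max_le_iff) auto
qed

lemma sum_mult_divw_eq:
  fixes w :: "'v::finite \<Rightarrow> 'v \<Rightarrow> real"
  assumes sym: "\<And>x y. w x y = w y x"
  shows "(\<Sum>x\<in>UNIV. u x * divw w q x) = 1/2 * (\<Sum>x\<in>UNIV. \<Sum>y\<in>UNIV. w x y * q x y * (u x - u y))"
proof -
  have "(\<Sum>x\<in>UNIV. u x * divw w q x) = 1/2 * ((\<Sum>x\<in>UNIV. \<Sum>y\<in>UNIV. w x y * q x y * u x)
        - (\<Sum>x\<in>UNIV. \<Sum>y\<in>UNIV. w x y * q y x * u x))"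
    unfolding divw_def by (simp add: sum_distrib_left sum_subtractf algebra_simps)
  also have "(\<Sum>x\<in>UNIV. \<Sum>y\<in>UNIV. w x y * q y x * u x) = (\<Sum>x\<in>UNIV. \<Sum>y\<in>UNIV. w x y * q x y * u y)"
    using sym by (subst sum.swap) simp
  finally show ?thesis
    by (simp add: sum_subtractf[symmetric] algebra_simps)
qed

lemma sum_mult_divw_le_TVw:
  fixes w :: "'v::finite \<Rightarrow> 'v \<Rightarrow> real"
  assumes "\<And>x y. w x y = w y x" and "\<And>x y. 0 \<le> w x y" and "\<And>x y. \<bar>q x y\<bar> \<le> 1"
  shows "(\<Sum>x\<in>UNIV. u x * divw w q x) \<le> TVw w u"
proof -
  have "w x y * q x y * (u x - u y) \<le> w x y * \<bar>u y - u x\<bar>" for x y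
  proof -
    have "q x y * (u x - u y) \<le> \<bar>q x y\<bar> * \<bar>u y - u x\<bar>"
      by (metis abs_ge_self abs_minus_commute abs_mult)
    also have "\<dots> \<le> \<bar>u y - u x\<bar>"
      using assms(3)[of x y] by (simp add: mult_left_le_one_le)
    finally show ?thesis
      using assms(2)[of x y] by (simp add: mult.assoc mult_left_mono)
  qed
  then show ?thesis
    unfolding sum_mult_divw_eq[OF assms(1)] TVw_def by (intro mult_left_mono sum_mono) auto
qed

lemma sum_mult_divw_sgn_eq_TVw:
  fixes w :: "'v::finite \<Rightarrow> 'v \<Rightarrow> real"
  assumes "\<And>x y. w x y = w y x"
  shows "(\<Sum>x\<in>UNIV. u x * divw w (\<lambda>a b. sgn (u a - u b)) x) = TVw w u"
proof -
  have "w x y * sgn (u x - u y) * (u x - u y) = w x y * \<bar>u y - u x\<bar>" for x y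
    by (simp add: mult.assoc abs_minus_commute abs_real_def sgn_real_def)
  then show ?thesis
    unfolding sum_mult_divw_eq[OF assms] TVw_def by (simp only:)
qed

lemma divw_convex_comb:
  "divw w (\<lambda>a b. t * q a b + (1 - t) * q' a b) x = t * divw w q x + (1 - t) * divw w q' x"
proof -
  have "divw w (\<lambda>a b. t * q a b + (1 - t) * q' a b) x
      = 1/2 * (\<Sum>y\<in>UNIV. t * (w x y * (q x y - q y x)) + (1 - t) * (w x y * (q' x y - q' y x)))"
    unfolding divw_def by (simp add: algebra_simps)
  also have "\<dots> = t * divw w q x + (1 - t) * divw w q' x"
    unfolding divw_def sum_convex_comb by algebra
  finally show ?thesis .
qed

section \<open>The Lagrangian\<close>

definition penalty :: "ereal \<Rightarrow> nat \<Rightarrow> nat \<Rightarrow> real \<Rightarrow> real" where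
  "penalty \<gamma> l h t = (if 0 < \<gamma> \<and> \<gamma> < \<infinity> then Pgam (real_of_ereal \<gamma>) l h t else 0)"

lemma primal_energy_eq:
  "primal_energy w n \<gamma> C Sl Su u = (\<Sum>i=1..n. \<Sum>x\<in>UNIV. C i x * u i x) + (\<Sum>i=1..n. TVw w (u i))
     + (\<Sum>i=1..n. penalty \<gamma> (Sl i) (Su i) (mass (u i)))"
proof (cases "0 < \<gamma> \<and> \<gamma> < \<infinity>")
  case True
  show ?thesis unfolding primal_energy_def penalty_def if_P[OF True] by simp
next
  case False
  show ?thesis unfolding primal_energy_def penalty_def if_not_P[OF False] by simp
qed

lemma penalty_eq_max:
  "l \<le> h \<Longrightarrow> penalty \<gamma> l h t =
     (if 0 < \<gamma> \<and> \<gamma> < \<infinity> then real_of_ereal \<gamma> * (max 0 (real l - t) + max 0 (t - real h)) else 0)"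
  unfolding penalty_def Pgam_def by (auto simp: max_def algebra_simps)

lemma multipliers_le_penalty:
  assumes "0 \<le> \<gamma>" "l \<le> h" "0 \<le> r1" "ereal r1 \<le> \<gamma>" "0 \<le> r2" "ereal r2 \<le> \<gamma>"
    and "\<gamma> = \<infinity> \<Longrightarrow> real l \<le> t \<and> t \<le> real h"
  shows "r1 * (real l - t) + r2 * (t - real h) \<le> penalty \<gamma> l h t"
proof (cases "0 < \<gamma> \<and> \<gamma> < \<infinity>")
  case True
  then obtain g where g: "\<gamma> = ereal g" by (cases \<gamma>) auto
  have "r * a \<le> g * max 0 a" if "0 \<le> r" "ereal r \<le> \<gamma>" for r a
  proof -
    have "r * a \<le> r * max 0 a" using that by (simp add: mult_left_mono)
    also have "\<dots> \<le> g * max 0 a" using that g by (simp add: mult_right_mono)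
    finally show ?thesis .
  qed
  with assms have "r1 * (real l - t) \<le> g * max 0 (real l - t)" "r2 * (t - real h) \<le> g * max 0 (t - real h)"
    by auto
  with True g \<open>l \<le> h\<close> show ?thesis
    by (simp add: penalty_eq_max algebra_simps)
next
  case False
  with assms have "\<gamma> = 0 \<or> \<gamma> = \<infinity>"
    by (cases \<gamma>) auto
  with assms have "r1 * (real l - t) \<le> 0" "r2 * (t - real h) \<le> 0"
    by (auto simp: zero_ereal_def mult_nonneg_nonpos)
  then show ?thesis
    unfolding penalty_def if_not_P[OF False] by simp
qed

lemma penalty_eq_active_multipliers:
  "l \<le> h \<Longrightarrow> penalty \<gamma> l h t =
     (if 0 < \<gamma> \<and> \<gamma> < \<infinity> \<and> t < real l then real_of_ereal \<gamma> else 0) * (real l - t)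
     + (if 0 < \<gamma> \<and> \<gamma> < \<infinity> \<and> real h < t then real_of_ereal \<gamma> else 0) * (t - real h)"
  unfolding penalty_def Pgam_def by auto

definition lagrangian :: "('v::finite \<Rightarrow> 'v \<Rightarrow> real) \<Rightarrow> nat \<Rightarrow> (nat \<Rightarrow> 'v \<Rightarrow> real)
    \<Rightarrow> (nat \<Rightarrow> nat) \<Rightarrow> (nat \<Rightarrow> nat) \<Rightarrow> (nat \<Rightarrow> 'v \<Rightarrow> real)
    \<Rightarrow> (nat \<Rightarrow> 'v \<Rightarrow> 'v \<Rightarrow> real) \<times> (nat \<Rightarrow> real) \<times> (nat \<Rightarrow> real) \<Rightarrow> real" where
  "lagrangian w n C Sl Su u d = (case d of (q, r1, r2) \<Rightarrow>
     (\<Sum>i=1..n. \<Sum>x\<in>UNIV. u i x * (C i x + divw w (q i) x + r2 i - r1 i))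
     + (\<Sum>i=1..n. r1 i * real (Sl i) - r2 i * real (Su i)))"

lemma lagrangian_split:
  "lagrangian w n C Sl Su u (q, r1, r2) = (\<Sum>i=1..n. \<Sum>x\<in>UNIV. C i x * u i x)
     + (\<Sum>i=1..n. \<Sum>x\<in>UNIV. u i x * divw w (q i) x)
     + (\<Sum>i=1..n. r1 i * (real (Sl i) - mass (u i)) + r2 i * (mass (u i) - real (Su i)))"
  unfolding lagrangian_def mass_def
  by (simp add: algebra_simps sum.distrib sum_subtractf sum_distrib_left sum_distrib_right)

lemma lagrangian_pointwise:
  "lagrangian w n C Sl Su u (q, r1, r2) =
     (\<Sum>x\<in>UNIV. \<Sum>i=1..n. u i x * (C i x + divw w (q i) x + r2 i - r1 i))
     + (\<Sum>i=1..n. r1 i * real (Sl i) - r2 i * real (Su i))"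
  unfolding lagrangian_def by (simp, subst sum.swap, simp)

lemma continuous_on_lagrangian: "continuous_on A (\<lambda>u. lagrangian w n C Sl Su u d)"
  unfolding lagrangian_def by (cases d) (auto intro!: continuous_intros)

lemma lagrangian_le_primal_energy:
  fixes w :: "'v::finite \<Rightarrow> 'v \<Rightarrow> real"
  assumes "\<And>x y. w x y = w y x" "\<And>x y. 0 \<le> w x y"
    and "\<And>i. i \<in> {1..n} \<Longrightarrow> Sl i \<le> Su i" "0 \<le> \<gamma>"
    and u: "u \<in> primal_feasible n \<gamma> Sl Su" and d: "d \<in> dual_feasible n \<gamma>"
  shows "lagrangian w n C Sl Su u d \<le> primal_energy w n \<gamma> C Sl Su u"
proof -
  obtain q r1 r2 where d_eq: "d = (q, r1, r2)" by (cases d)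
  have "(\<Sum>x\<in>UNIV. u i x * divw w (q i) x) \<le> TVw w (u i)" if "i \<in> {1..n}" for i
    using d that unfolding d_eq dual_feasible_def Sinf_def sup_norm_le_1_iff
    by (intro sum_mult_divw_le_TVw assms(1,2)) auto
  moreover have "r1 i * (real (Sl i) - mass (u i)) + r2 i * (mass (u i) - real (Su i))
      \<le> penalty \<gamma> (Sl i) (Su i) (mass (u i))" if "i \<in> {1..n}" for i
    using u d that assms(3,4) unfolding d_eq dual_feasible_def primal_feasible_def
    by (intro multipliers_le_penalty) auto
  ultimately show ?thesis
    unfolding d_eq lagrangian_split primal_energy_eq by (intro add_mono sum_mono) auto
qed

lemma lagrangian_attains_primal_energy:
  fixes w :: "'v::finite \<Rightarrow> 'v \<Rightarrow> real"
  assumes "\<And>x y. w x y = w y x" and "\<And>i. i \<in> {1..n} \<Longrightarrow> Sl i \<le> Su i" "0 \<le> \<gamma>"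
  shows "\<exists>d\<in>dual_feasible n \<gamma>. lagrangian w n C Sl Su u d = primal_energy w n \<gamma> C Sl Su u"
proof -
  define active :: "bool \<Rightarrow> real" where
    "active P = (if 0 < \<gamma> \<and> \<gamma> < \<infinity> \<and> P then real_of_ereal \<gamma> else 0)" for P
  define d where "d = ((\<lambda>i a b. sgn (u i a - u i b)),
      (\<lambda>i. active (mass (u i) < real (Sl i))), (\<lambda>i. active (real (Su i) < mass (u i))))"
  have "0 \<le> active P \<and> ereal (active P) \<le> \<gamma>" for P
    using \<open>0 \<le> \<gamma>\<close> unfolding active_def by (cases \<gamma>) auto
  then have "d \<in> dual_feasible n \<gamma>"
    unfolding d_def dual_feasible_def Sinf_def sup_norm_le_1_iff by (auto simp: abs_sgn_eq)
  moreover have "lagrangian w n C Sl Su u d = primal_energy w n \<gamma> C Sl Su u"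
    unfolding d_def lagrangian_split primal_energy_eq sum_mult_divw_sgn_eq_TVw[OF assms(1)]
    using assms(2) by (simp add: penalty_eq_active_multipliers active_def)
  ultimately show ?thesis by blast
qed

lemma lagrangian_unbounded_if_infeasible:
  fixes w :: "'v::finite \<Rightarrow> 'v \<Rightarrow> real"
  assumes "\<gamma> = \<infinity>" "u \<in> Bprime n" "u \<notin> primal_feasible n \<gamma> Sl Su"
  shows "\<exists>d\<in>dual_feasible n \<gamma>. c < lagrangian w n C Sl Su u d"
proof -
  define lo where "lo i = real (Sl i) - mass (u i)" for i
  define hi where "hi i = mass (u i) - real (Su i)" for i
  define V where "V = (\<Sum>i=1..n. max 0 (lo i) * lo i + max 0 (hi i) * hi i)"
  have max_mult_self: "0 \<le> max 0 a * a" "0 < a \<Longrightarrow> 0 < max 0 a * a" for a :: real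
    by (simp_all add: max_def)
  obtain i0 where "i0 \<in> {1..n}" "0 < lo i0 \<or> 0 < hi i0"
    using assms unfolding primal_feasible_def lo_def hi_def by force
  then have "0 < max 0 (lo i0) * lo i0 + max 0 (hi i0) * hi i0"
    using max_mult_self by (metis add_nonneg_pos add_pos_nonneg)
  then have "0 < V"
    unfolding V_def using \<open>i0 \<in> {1..n}\<close> max_mult_self(1) by (intro sum_pos2[of _ i0] add_nonneg_nonneg) auto
  define A where "A = (\<Sum>i=1..n. \<Sum>x\<in>UNIV. C i x * u i x)"
  define M where "M = (\<bar>c - A\<bar> + 1) / V"
  define d :: "(nat \<Rightarrow> 'v \<Rightarrow> 'v \<Rightarrow> real) \<times> (nat \<Rightarrow> real) \<times> (nat \<Rightarrow> real)"
    where "d = ((\<lambda>i a b. 0), (\<lambda>i. M * max 0 (lo i)), (\<lambda>i. M * max 0 (hi i)))"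
  have "0 \<le> M" "M * V = \<bar>c - A\<bar> + 1"
    using \<open>0 < V\<close> unfolding M_def by auto
  then have "d \<in> dual_feasible n \<gamma>"
    using assms(1) unfolding d_def dual_feasible_def Sinf_def sup_norm_le_1_iff by auto
  moreover have "divw w (\<lambda>a b. 0) x = 0" for x
    by (simp add: divw_def)
  then have "lagrangian w n C Sl Su u d = A + M * V"
    unfolding d_def lagrangian_split A_def V_def lo_def[symmetric] hi_def[symmetric]
    by (simp add: sum_distrib_left distrib_left mult.assoc)
  ultimately show ?thesis
    using \<open>M * V = \<bar>c - A\<bar> + 1\<close> by (intro bexI[of _ d]) auto
qed

lemma dual_objective_le_lagrangian:
  "u \<in> Bprime n \<Longrightarrow> dual_objective w n C Sl Su d \<le> lagrangian w n C Sl Su u d"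
  unfolding dual_objective_def Bprime_def
  by (cases d) (auto simp: lagrangian_pointwise intro!: sum_mono Min_le_convex_combination)

(* Bprime n leaves the components u i with i outside {1..n} unconstrained; pinning them to 0
   gives a compact set on which the energies are unchanged. *)
definition Bprime0 :: "nat \<Rightarrow> (nat \<Rightarrow> 'v::finite \<Rightarrow> real) set" where
  "Bprime0 n = {u \<in> Bprime n. \<forall>i. i \<notin> {1..n} \<longrightarrow> u i = (\<lambda>_. 0)}"

lemma dual_objective_attained:
  assumes "n \<ge> 1"
  shows "\<exists>u\<in>Bprime0 n. lagrangian w n C Sl Su u d = dual_objective w n C Sl Su d"
proof -
  obtain q r1 r2 where d: "d = (q, r1, r2)" by (cases d)
  define a where "a i x = C i x + divw w (q i) x + r2 i - r1 i" for i x
  have "Min ((\<lambda>i. a i x) ` {1..n}) \<in> (\<lambda>i. a i x) ` {1..n}" for x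
    using assms by (intro Min_in) auto
  then have "\<forall>x. \<exists>i. i \<in> {1..n} \<and> a i x = Min ((\<lambda>i. a i x) ` {1..n})"
    by (metis imageE)
  then obtain k where k: "\<And>x. k x \<in> {1..n}" "\<And>x. a (k x) x = Min ((\<lambda>i. a i x) ` {1..n})"
    by metis
  define u where "u i x = (if i = k x then 1 else 0 :: real)" for i x
  have sum_u: "(\<Sum>i=1..n. u i x * f i) = f (k x)" for x and f :: "nat \<Rightarrow> real"
    using k(1)[of x] by (simp add: u_def if_distrib[of "\<lambda>c. c * _"] sum.delta' cong: if_cong)
  have "u \<in> Bprime0 n"
    using sum_u[of _ "\<lambda>_. 1"] k(1) unfolding Bprime0_def Bprime_def by (auto simp: u_def fun_eq_iff)
  moreover have "lagrangian w n C Sl Su u d = dual_objective w n C Sl Su d"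
    unfolding d lagrangian_pointwise dual_objective_def sum_u by (simp add: a_def[symmetric] k(2))
  ultimately show ?thesis by blast
qed

lemma Bprime0_convex_comb:
  assumes "u \<in> Bprime0 n" "u' \<in> Bprime0 n" "t \<in> {0..1}"
  shows "(\<lambda>i x. t * u i x + (1 - t) * u' i x) \<in> Bprime0 n"
proof -
  have "(\<Sum>i=1..n. t * u i x + (1 - t) * u' i x) = 1" for x
    using assms(1,2) unfolding Bprime0_def Bprime_def
    by (simp add: sum.distrib sum_distrib_left[symmetric])
  then show ?thesis
    using assms unfolding Bprime0_def Bprime_def
    by (auto simp: fun_eq_iff intro!: convex_comb_le[of _ 1, simplified])
qed

lemma lagrangian_convex_comb_left:
  "lagrangian w n C Sl Su (\<lambda>i x. t * u i x + (1 - t) * u' i x) d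
     = t * lagrangian w n C Sl Su u d + (1 - t) * lagrangian w n C Sl Su u' d"
proof -
  obtain q r1 r2 where d: "d = (q, r1, r2)" by (cases d)
  define a where "a i x = C i x + divw w (q i) x + r2 i - r1 i" for i x
  define K where "K = (\<Sum>i=1..n. r1 i * real (Sl i) - r2 i * real (Su i))"
  have L: "lagrangian w n C Sl Su v d = (\<Sum>i=1..n. \<Sum>x\<in>UNIV. v i x * a i x) + K" for v
    unfolding d lagrangian_def a_def K_def by simp
  have "(\<Sum>i=1..n. \<Sum>x\<in>UNIV. (t * u i x + (1 - t) * u' i x) * a i x)
      = t * (\<Sum>i=1..n. \<Sum>x\<in>UNIV. u i x * a i x) + (1 - t) * (\<Sum>i=1..n. \<Sum>x\<in>UNIV. u' i x * a i x)"
    by (simp only: distrib_right mult.assoc sum_convex_comb)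
  then show ?thesis
    unfolding L by (simp add: algebra_simps)
qed

lemma lagrangian_convex_comb_right:
  "lagrangian w n C Sl Su u ((\<lambda>i a b. t * q i a b + (1 - t) * q' i a b),
       (\<lambda>i. t * r1 i + (1 - t) * r1' i), (\<lambda>i. t * r2 i + (1 - t) * r2' i))
     = t * lagrangian w n C Sl Su u (q, r1, r2) + (1 - t) * lagrangian w n C Sl Su u (q', r1', r2')"
proof -
  define a where "a i x = C i x + divw w (q i) x + r2 i - r1 i" for i x
  define a' where "a' i x = C i x + divw w (q' i) x + r2' i - r1' i" for i x
  have "(\<Sum>i=1..n. \<Sum>x\<in>UNIV. u i x * (t * a i x + (1 - t) * a' i x))
      = (\<Sum>i=1..n. \<Sum>x\<in>UNIV. t * (u i x * a i x) + (1 - t) * (u i x * a' i x))"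
    by (simp add: algebra_simps)
  moreover have "(\<Sum>i=1..n. (t * r1 i + (1 - t) * r1' i) * real (Sl i) - (t * r2 i + (1 - t) * r2' i) * real (Su i))
      = (\<Sum>i=1..n. t * (r1 i * real (Sl i) - r2 i * real (Su i))
                    + (1 - t) * (r1' i * real (Sl i) - r2' i * real (Su i)))"
    by (simp add: algebra_simps)
  ultimately show ?thesis
    unfolding lagrangian_def prod.case divw_convex_comb sum_convex_comb
    by (simp add: a_def a'_def algebra_simps)
qed

lemma affinelike_Bprime0:
  fixes w :: "'v::finite \<Rightarrow> 'v \<Rightarrow> real"
  shows "affinelike (Bprime0 n) ((\<lambda>d u. lagrangian w n C Sl Su u d) ` D)"
  unfolding affinelike_def
proof (intro ballI)
  fix u u' :: "nat \<Rightarrow> 'v \<Rightarrow> real" and t :: real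
  assume "u \<in> Bprime0 n" "u' \<in> Bprime0 n" "t \<in> {0..1}"
  then show "\<exists>z\<in>Bprime0 n. \<forall>f\<in>(\<lambda>d u. lagrangian w n C Sl Su u d) ` D. f z = t * f u + (1 - t) * f u'"
    by (intro bexI[of _ "\<lambda>i x. t * u i x + (1 - t) * u' i x"])
      (simp_all add: Bprime0_convex_comb lagrangian_convex_comb_left)
qed

lemma dual_feasible_convex_comb:
  assumes "(q, r1, r2) \<in> dual_feasible n \<gamma>" "(q', r1', r2') \<in> dual_feasible n \<gamma>" "t \<in> {0..1}"
  shows "((\<lambda>i a b. t * q i a b + (1 - t) * q' i a b),
      (\<lambda>i. t * r1 i + (1 - t) * r1' i), (\<lambda>i. t * r2 i + (1 - t) * r2' i)) \<in> dual_feasible n \<gamma>"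
proof -
  have "\<bar>t * q i a b + (1 - t) * q' i a b\<bar> \<le> 1" if "i \<in> {1..n}" for i a b
    using assms that unfolding dual_feasible_def Sinf_def sup_norm_le_1_iff
    by (intro abs_convex_comb_le) auto
  moreover have "0 \<le> t * r i + (1 - t) * r' i \<and> ereal (t * r i + (1 - t) * r' i) \<le> \<gamma>"
    if "i \<in> {1..n}" "0 \<le> r i" "ereal (r i) \<le> \<gamma>" "0 \<le> r' i" "ereal (r' i) \<le> \<gamma>" for i r r'
    using that assms(3) by (simp add: ereal_convex_comb_le)
  ultimately show ?thesis
    using assms unfolding dual_feasible_def Sinf_def sup_norm_le_1_iff by simp
qed

lemma affinelike_dual_feasible:
  fixes w :: "'v::finite \<Rightarrow> 'v \<Rightarrow> real"
  shows "affinelike (dual_feasible n \<gamma>) (lagrangian w n C Sl Su ` U)"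
  unfolding affinelike_def
proof (intro ballI)
  fix d d' :: "(nat \<Rightarrow> 'v \<Rightarrow> 'v \<Rightarrow> real) \<times> (nat \<Rightarrow> real) \<times> (nat \<Rightarrow> real)" and t :: real
  assume "d \<in> dual_feasible n \<gamma>" "d' \<in> dual_feasible n \<gamma>" "t \<in> {0..1}"
  moreover obtain q r1 r2 q' r1' r2' where "d = (q, r1, r2)" "d' = (q', r1', r2')"
    by (cases d, cases d')
  ultimately show "\<exists>z\<in>dual_feasible n \<gamma>. \<forall>f\<in>lagrangian w n C Sl Su ` U.
      f z = t * f d + (1 - t) * f d'"
    by (intro bexI[of _ "((\<lambda>i a b. t * q i a b + (1 - t) * q' i a b),
        (\<lambda>i. t * r1 i + (1 - t) * r1' i), (\<lambda>i. t * r2 i + (1 - t) * r2' i))"])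
      (simp_all add: dual_feasible_convex_comb lagrangian_convex_comb_right)
qed

section \<open>Strong duality\<close>

lemma compact_Bprime0: "compact (Bprime0 n :: (nat \<Rightarrow> 'v::finite \<Rightarrow> real) set)"
proof -
  have "Bprime0 n = (Pi\<^sub>E UNIV (\<lambda>i. if i \<in> {1..n} then Pi\<^sub>E UNIV (\<lambda>_::'v. {0..1::real}) else {\<lambda>_. 0}))
      \<inter> {u. \<forall>x. (\<Sum>i=1..n. u i x) = 1}"
    unfolding Bprime0_def Bprime_def PiE_UNIV_domain by (auto simp: Pi_iff split: if_splits)
  moreover have "compact (Pi\<^sub>E UNIV (\<lambda>i. if i \<in> {1..n} then Pi\<^sub>E UNIV (\<lambda>_::'v. {0..1::real}) else {\<lambda>_. 0}))"
    by (intro compact_PiE_UNIV) (auto intro: compact_PiE_UNIV)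
  moreover have "closed {u :: nat \<Rightarrow> 'v \<Rightarrow> real. \<forall>x. (\<Sum>i=1..n. u i x) = 1}"
    by (intro closed_Collect_all closed_Collect_eq continuous_intros)
  ultimately show ?thesis
    by (simp add: compact_Int_closed)
qed

lemma compact_Bprime0_Int_primal_feasible:
  "compact (Bprime0 n \<inter> primal_feasible n \<gamma> Sl Su :: (nat \<Rightarrow> 'v::finite \<Rightarrow> real) set)"
proof -
  define bounds :: "(nat \<Rightarrow> 'v \<Rightarrow> real) set" where
    "bounds = (\<Inter>i\<in>{1..n}. {u. real (Sl i) \<le> mass (u i) \<and> mass (u i) \<le> real (Su i)})"
  have "closed bounds"
    unfolding bounds_def mass_def by (intro closed_INT ballI closed_Collect_conj closed_Collect_le continuous_intros)
  moreover have "Bprime0 n \<inter> primal_feasible n \<gamma> Sl Su = Bprime0 n \<inter> (if \<gamma> = \<infinity> then bounds else UNIV)"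
    unfolding Bprime0_def primal_feasible_def bounds_def by auto
  ultimately show ?thesis
    by (simp add: compact_Int_closed compact_Bprime0)
qed

lemma continuous_on_primal_energy:
  assumes "\<And>i. i \<in> {1..n} \<Longrightarrow> Sl i \<le> Su i"
  shows "continuous_on A (primal_energy w n \<gamma> C Sl Su)"
proof -
  let ?active = "0 < \<gamma> \<and> \<gamma> < \<infinity>"
  have eq: "primal_energy w n \<gamma> C Sl Su = (\<lambda>u. (\<Sum>i=1..n. \<Sum>x\<in>UNIV. C i x * u i x) + (\<Sum>i=1..n. TVw w (u i))
     + (\<Sum>i=1..n. if ?active then real_of_ereal \<gamma> *
          (max 0 (real (Sl i) - mass (u i)) + max 0 (mass (u i) - real (Su i))) else 0))"
    using assms by (simp add: fun_eq_iff primal_energy_eq penalty_eq_max)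
  show ?thesis
  proof (cases ?active)
    case True
    show ?thesis
      unfolding eq TVw_def mass_def if_P[OF True] by (intro continuous_intros)
  next
    case False
    show ?thesis
      unfolding eq TVw_def mass_def if_not_P[OF False] by (intro continuous_intros)
  qed
qed

lemma Bprime0_Int_primal_feasible_nonempty:
  assumes "n \<ge> 1" "\<And>i. i \<in> {1..n} \<Longrightarrow> Sl i \<le> Su i"
    and "(\<Sum>i=1..n. Sl i) \<le> CARD('v::finite)" "CARD('v) \<le> (\<Sum>i=1..n. Su i)"
  shows "Bprime0 n \<inter> primal_feasible n \<gamma> Sl Su \<noteq> ({} :: (nat \<Rightarrow> 'v \<Rightarrow> real) set)"
proof -
  \<comment> \<open>A labelling constant in \<open>x\<close>, with masses interpolating between the two bound vectors.\<close>
  define N where "N = real CARD('v)"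
  define SL where "SL = (\<Sum>i=1..n. real (Sl i))"
  define SU where "SU = (\<Sum>i=1..n. real (Su i))"
  have "0 < N" "SL \<le> N" "N \<le> SU"
    using assms(3,4) unfolding N_def SL_def SU_def by (simp_all flip: of_nat_sum)
  define \<theta> where "\<theta> = (if SU = SL then 0 else (N - SL) / (SU - SL))"
  have \<theta>: "0 \<le> \<theta>" "\<theta> \<le> 1" "SL + \<theta> * (SU - SL) = N"
    using \<open>SL \<le> N\<close> \<open>N \<le> SU\<close> unfolding \<theta>_def by (auto simp: divide_le_eq_1)
  define s where "s i = real (Sl i) + \<theta> * (real (Su i) - real (Sl i))" for i
  have s_bounds: "real (Sl i) \<le> s i \<and> s i \<le> real (Su i)" if "i \<in> {1..n}" for i
    using assms(2)[OF that] \<theta>(1,2) mult_left_le_one_le[of "real (Su i) - real (Sl i)" \<theta>]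
    unfolding s_def by simp
  have sum_s: "(\<Sum>i=1..n. s i) = N"
    using \<theta>(3) unfolding s_def SL_def SU_def
    by (simp add: sum.distrib sum_distrib_left sum_subtractf right_diff_distrib)
  have s_le_N: "s i \<le> N" if "i \<in> {1..n}" for i
    using member_le_sum[of i "{1..n}" s] s_bounds sum_s that by force
  define u :: "nat \<Rightarrow> 'v \<Rightarrow> real" where "u i x = (if i \<in> {1..n} then s i / N else 0)" for i x
  have "(\<Sum>i=1..n. u i x) = 1" for x
    using sum_s \<open>0 < N\<close> by (simp add: u_def sum_divide_distrib[symmetric])
  moreover have "mass (u i) = s i" if "i \<in> {1..n}" for i
    using that \<open>0 < N\<close> unfolding mass_def u_def N_def by simp
  moreover have "0 \<le> s i" if "i \<in> {1..n}" for i
    using s_bounds[OF that] by linarith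
  ultimately have "u \<in> Bprime0 n \<inter> primal_feasible n \<gamma> Sl Su"
    using s_bounds s_le_N \<open>0 < N\<close>
    unfolding Bprime0_def Bprime_def primal_feasible_def by (auto simp: u_def fun_eq_iff)
  then show ?thesis by blast
qed

lemma primal_energy_cong:
  "(\<And>i. i \<in> {1..n} \<Longrightarrow> u i = v i) \<Longrightarrow> primal_energy w n \<gamma> C Sl Su u = primal_energy w n \<gamma> C Sl Su v"
  unfolding primal_energy_eq by (intro arg_cong2[where f = "(+)"] sum.cong) auto

lemma primal_energy_attains_minimum:
  assumes "n \<ge> 1" "\<And>i. i \<in> {1..n} \<Longrightarrow> Sl i \<le> Su i"
    and "(\<Sum>i=1..n. Sl i) \<le> CARD('v::finite)" "CARD('v) \<le> (\<Sum>i=1..n. Su i)"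
  shows "\<exists>u \<in> primal_feasible n \<gamma> Sl Su. \<forall>v \<in> primal_feasible n \<gamma> Sl Su.
           primal_energy w n \<gamma> C Sl Su u \<le> primal_energy w n \<gamma> C Sl Su (v :: nat \<Rightarrow> 'v \<Rightarrow> real)"
proof -
  let ?E = "primal_energy w n \<gamma> C Sl Su"
  have "Bprime0 n \<inter> primal_feasible n \<gamma> Sl Su \<noteq> ({} :: (nat \<Rightarrow> 'v \<Rightarrow> real) set)"
    using assms by (rule Bprime0_Int_primal_feasible_nonempty)
  moreover have "continuous_on (Bprime0 n \<inter> primal_feasible n \<gamma> Sl Su) ?E"
    using assms(2) by (rule continuous_on_primal_energy)
  ultimately obtain u where u: "u \<in> Bprime0 n \<inter> primal_feasible n \<gamma> Sl Su"
    and min: "\<forall>v \<in> Bprime0 n \<inter> primal_feasible n \<gamma> Sl Su. ?E u \<le> ?E v"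
    using continuous_attains_inf[OF compact_Bprime0_Int_primal_feasible] by blast
  have "?E u \<le> ?E v" if "v \<in> primal_feasible n \<gamma> Sl Su" for v
  proof -
    define v0 where "v0 i = (if i \<in> {1..n} then v i else (\<lambda>_. 0))" for i
    have "v0 \<in> Bprime0 n \<inter> primal_feasible n \<gamma> Sl Su"
      using that unfolding v0_def Bprime0_def primal_feasible_def Bprime_def by auto
    with min have "?E u \<le> ?E v0" by blast
    also have "?E v0 = ?E v"
      by (rule primal_energy_cong) (simp add: v0_def)
    finally show ?thesis .
  qed
  with u show ?thesis by blast
qed

lemma weak_duality:
  fixes w :: "'v::finite \<Rightarrow> 'v \<Rightarrow> real"
  assumes "\<And>x y. w x y = w y x" "\<And>x y. 0 \<le> w x y"
    and "\<And>i. i \<in> {1..n} \<Longrightarrow> Sl i \<le> Su i" "0 \<le> \<gamma>"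
    and "u \<in> primal_feasible n \<gamma> Sl Su" "d \<in> dual_feasible n \<gamma>"
  shows "dual_objective w n C Sl Su d \<le> primal_energy w n \<gamma> C Sl Su u"
proof -
  have "dual_objective w n C Sl Su d \<le> lagrangian w n C Sl Su u d"
    using assms(5) unfolding primal_feasible_def by (intro dual_objective_le_lagrangian) simp
  also have "\<dots> \<le> primal_energy w n \<gamma> C Sl Su u"
    using assms by (rule lagrangian_le_primal_energy)
  finally show ?thesis .
qed

lemma dual_objective_exceeds_primal_lower_bound:
  fixes w :: "'v::finite \<Rightarrow> 'v \<Rightarrow> real"
  assumes "\<And>x y. w x y = w y x" "\<And>i. i \<in> {1..n} \<Longrightarrow> Sl i \<le> Su i" "n \<ge> 1" "0 \<le> \<gamma>"
    and below: "\<And>v. v \<in> primal_feasible n \<gamma> Sl Su \<Longrightarrow> c < primal_energy w n \<gamma> C Sl Su v"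
  shows "\<exists>d \<in> dual_feasible n \<gamma>. c < dual_objective w n C Sl Su d"
proof -
  let ?L = "lagrangian w n C Sl Su"
  have "\<exists>d \<in> dual_feasible n \<gamma>. c < ?L u d" if "u \<in> Bprime0 n" for u
  proof (cases "u \<in> primal_feasible n \<gamma> Sl Su")
    case True
    obtain d where "d \<in> dual_feasible n \<gamma>" "?L u d = primal_energy w n \<gamma> C Sl Su u"
      using lagrangian_attains_primal_energy[of w n Sl Su \<gamma> C u] assms(1,2,4) by blast
    with below[OF True] show ?thesis by (intro bexI[of _ d]) auto
  next
    case False
    with that have "\<gamma> = \<infinity>" "u \<in> Bprime n"
      unfolding Bprime0_def primal_feasible_def by auto
    then show ?thesis
      using False by (rule lagrangian_unbounded_if_infeasible)
  qed
  moreover have "((\<lambda>i a b. 0), (\<lambda>i. 0), (\<lambda>i. 0)) \<in> (dual_feasible n \<gamma> :: (_ \<times> _ \<times> _) set)"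
    using assms(4) unfolding dual_feasible_def Sinf_def sup_norm_le_1_iff by (simp add: zero_ereal_def)
  then have "dual_feasible n \<gamma> \<noteq> {}" by blast
  ultimately obtain z where "z \<in> dual_feasible n \<gamma>" "\<forall>u \<in> Bprime0 n. c < ?L u z"
    using minimax_compact[OF _ compact_Bprime0 continuous_on_lagrangian affinelike_Bprime0 affinelike_dual_feasible]
    by blast
  moreover obtain u where "u \<in> Bprime0 n" "?L u z = dual_objective w n C Sl Su z"
    using dual_objective_attained[OF assms(3)] by blast
  ultimately show ?thesis by (intro bexI[of _ z]) auto
qed

lemma strong_duality:
  fixes w :: "'v::finite \<Rightarrow> 'v \<Rightarrow> real"
  assumes "\<And>x y. w x y = w y x" "\<And>x y. 0 \<le> w x y" "n \<ge> 1"
    and "\<And>i. i \<in> {1..n} \<Longrightarrow> Sl i \<le> Su i" "0 \<le> \<gamma>"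
    and u: "u \<in> primal_feasible n \<gamma> Sl Su"
    and min: "\<And>v. v \<in> primal_feasible n \<gamma> Sl Su \<Longrightarrow> primal_energy w n \<gamma> C Sl Su u \<le> primal_energy w n \<gamma> C Sl Su v"
  shows "(SUP d \<in> dual_feasible n \<gamma>. ereal (dual_objective w n C Sl Su d)) = ereal (primal_energy w n \<gamma> C Sl Su u)"
proof (rule antisym)
  show "(SUP d \<in> dual_feasible n \<gamma>. ereal (dual_objective w n C Sl Su d)) \<le> ereal (primal_energy w n \<gamma> C Sl Su u)"
    using weak_duality[OF assms(1,2,4,5) u] by (simp add: SUP_least)
  show "ereal (primal_energy w n \<gamma> C Sl Su u) \<le> (SUP d \<in> dual_feasible n \<gamma>. ereal (dual_objective w n C Sl Su d))"
  proof (rule dense_le)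
    fix y assume y: "y < ereal (primal_energy w n \<gamma> C Sl Su u)"
    show "y \<le> (SUP d \<in> dual_feasible n \<gamma>. ereal (dual_objective w n C Sl Su d))"
    proof (cases y)
      case (real c)
      with y min have "c < primal_energy w n \<gamma> C Sl Su v" if "v \<in> primal_feasible n \<gamma> Sl Su" for v
        using that by force
      then obtain d where "d \<in> dual_feasible n \<gamma>" "c < dual_objective w n C Sl Su d"
        using dual_objective_exceeds_primal_lower_bound[of w n Sl Su \<gamma> c C] assms(1,3-5) by blast
      then show ?thesis
        unfolding real by (intro SUP_upper2) auto
    qed (use y in auto)
  qed
qed

theorem theorem1:
  fixes w :: "'v::finite \<Rightarrow> 'v \<Rightarrow> real"
    and n :: nat and C :: "nat \<Rightarrow> 'v \<Rightarrow> real"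
    and Sl Su :: "nat \<Rightarrow> nat" and \<gamma> :: ereal
  assumes "\<And>x y. w x y = w y x"
    and "\<And>x y. 0 \<le> w x y"
    and "n \<ge> 2"
    and "\<And>i. i \<in> {1..n} \<Longrightarrow> Sl i \<le> Su i"
    and "(\<Sum>i=1..n. Sl i) \<le> CARD('v)" and "CARD('v) \<le> (\<Sum>i=1..n. Su i)"
    and "0 \<le> \<gamma>"
  shows "\<exists>u \<in> primal_feasible n \<gamma> Sl Su.
           (\<forall>v \<in> primal_feasible n \<gamma> Sl Su.
               primal_energy w n \<gamma> C Sl Su u \<le> primal_energy w n \<gamma> C Sl Su v)
         \<and> (SUP d \<in> dual_feasible n \<gamma>. ereal (dual_objective w n C Sl Su d))
             = ereal (primal_energy w n \<gamma> C Sl Su u)"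
proof -
  have "n \<ge> 1" using assms(3) by simp
  then obtain u where u: "u \<in> primal_feasible n \<gamma> Sl Su"
    and min: "\<forall>v \<in> primal_feasible n \<gamma> Sl Su. primal_energy w n \<gamma> C Sl Su u \<le> primal_energy w n \<gamma> C Sl Su v"
    using primal_energy_attains_minimum[OF _ assms(4-6)] by blast
  moreover have "(SUP d \<in> dual_feasible n \<gamma>. ereal (dual_objective w n C Sl Su d)) = ereal (primal_energy w n \<gamma> C Sl Su u)"
    using assms(1,2,4,7) \<open>n \<ge> 1\<close> u min by (intro strong_duality) auto
  ultimately show ?thesis by blast
qed

end
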